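(* Let $n\ge2$ and let $\mathfrak{g}_n$ be the Lie algebra defined in the context. The linear map $\rho:\mathfrak{g}_n\to\mathfrak{sl}_{2(n-1)}(\mathbb{K})$ sending $$x=ah+bx_++cx_-+\sum_{i=1}^{n-2}(d_iy_{i,+}+e_iy_{i,-})+\sum_{1\le i\le j\le n-2}m_{ij}z_{i,j}$$ to the $2(n-1)\times2(n-1)$ matrix $X$ whose rows $1,\dots,n-2$ are zero, whose row $n-1$ is $(d_1,\dots,d_{n-2},a,b,0,\dots,0)$, whose row $n$ is $(e_1,\dots,e_{n-2},c,-a,0,\dots,0)$, and whose row $n+i$ ($1\le i\le n-2$) is $(\mu_{i1},\dots,\mu_{i,n-2},-e_i,d_i,0,\dots,0)$, where $\mu$ is the symmetric $(n-2)\times(n-2)$ matrix with $\mu_{ii}=2m_{ii}$ and $\mu_{ij}=\mu_{ji}=m_{ij}$ for $i<j$, is a faithful representation of $\mathfrak{g}_n$. Equivalently, in terms of matrix units $E_{i,j}$: $\rho(x_+)=E_{n-1,n}$, $\rho(x_-)=E_{n,n-1}$, $\rho(h)=E_{n-1,n-1}-E_{n,n}$, $\rho(y_{i,+})=E_{n-1,i}+E_{n+i,n}$, $\rho(y_{i,-})=E_{n,i}-E_{n+i,n-1}$, $\rho(z_{i,j})=E_{i+n,j}+E_{j+n,i}$.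
   Context: $\mathbb{K}$ is $\mathbb{R}$ or $\mathbb{C}$. For $n\ge2$, $\mathfrak{g}_n$ is the Lie algebra with basis $h,x_-,x_+$, $y_{i,\pm}$ ($1\le i\le n-2$), $z_{i,j}$ ($1\le i\le j\le n-2$), with Lie bracket defined by the nonzero brackets (up to antisymmetry) $[x_+,x_-]=h$, $[h,x_\pm]=\pm2x_\pm$, $[h,y_{i,\pm}]=\pm y_{i,\pm}$, $[x_-,y_{i,+}]=y_{i,-}$, $[x_+,y_{i,-}]=y_{i,+}$, $[y_{i,+},y_{j,-}]=z_{\min(i,j),\max(i,j)}$, all other brackets of basis elements being zero. $E_{i,j}$ denotes the matrix whose only nonzero entry is a $1$ in position $(i,j)$. *)

theory Defs
  imports Complex_Main
begin

text \<open>Basis of g_n: H = h, Xp = x_+, Xm = x_-, Yp i = y_{i,+}, Ym i = y_{i,-}, Z i j = z_{i,j}.\<close>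
datatype gb = H | Xp | Xm | Yp nat | Ym nat | Z nat nat

definition gbasis :: "nat \<Rightarrow> gb set" where
  "gbasis n = {H, Xp, Xm} \<union> {Yp i | i. 1 \<le> i \<and> i \<le> n - 2} \<union> {Ym i | i. 1 \<le> i \<and> i \<le> n - 2}
     \<union> {Z i j | i j. 1 \<le> i \<and> i \<le> j \<and> j \<le> n - 2}"

text \<open>Elements of g_n over K: coefficient functions supported on the basis.\<close>
definition gelem :: "nat \<Rightarrow> (gb \<Rightarrow> 'k::zero) set" where
  "gelem n = {u. \<forall>b. b \<notin> gbasis n \<longrightarrow> u b = 0}"

definition gunit :: "gb \<Rightarrow> gb \<Rightarrow> 'k::{zero,one}" where
  "gunit b = (\<lambda>c. if c = b then 1 else 0)"

fun brb :: "gb \<Rightarrow> gb \<Rightarrow> gb \<Rightarrow> 'k::comm_ring_1" where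
  "brb Xp Xm = gunit H"
| "brb Xm Xp = (\<lambda>c. - gunit H c)"
| "brb H Xp = (\<lambda>c. 2 * gunit Xp c)"
| "brb Xp H = (\<lambda>c. - 2 * gunit Xp c)"
| "brb H Xm = (\<lambda>c. - 2 * gunit Xm c)"
| "brb Xm H = (\<lambda>c. 2 * gunit Xm c)"
| "brb H (Yp i) = gunit (Yp i)"
| "brb (Yp i) H = (\<lambda>c. - gunit (Yp i) c)"
| "brb H (Ym i) = (\<lambda>c. - gunit (Ym i) c)"
| "brb (Ym i) H = gunit (Ym i)"
| "brb Xm (Yp i) = gunit (Ym i)"
| "brb (Yp i) Xm = (\<lambda>c. - gunit (Ym i) c)"
| "brb Xp (Ym i) = gunit (Yp i)"
| "brb (Ym i) Xp = (\<lambda>c. - gunit (Yp i) c)"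
| "brb (Yp i) (Ym j) = gunit (Z (min i j) (max i j))"
| "brb (Ym j) (Yp i) = (\<lambda>c. - gunit (Z (min i j) (max i j)) c)"
| "brb _ _ = (\<lambda>c. 0)"

definition glie :: "nat \<Rightarrow> (gb \<Rightarrow> 'k::comm_ring_1) \<Rightarrow> (gb \<Rightarrow> 'k) \<Rightarrow> gb \<Rightarrow> 'k" where
  "glie n u v = (\<lambda>c. \<Sum>b1\<in>gbasis n. \<Sum>b2\<in>gbasis n. u b1 * v b2 * brb b1 b2 c)"

text \<open>Square matrices of size 2(n-1), indices 1..2(n-1), as functions nat => nat => K
  (entries outside the index range are 0).\<close>
definition msize :: "nat \<Rightarrow> nat" where "msize n = 2 * (n - 1)"

definition mmul :: "nat \<Rightarrow> (nat \<Rightarrow> nat \<Rightarrow> 'k::comm_ring_1) \<Rightarrow> (nat \<Rightarrow> nat \<Rightarrow> 'k) \<Rightarrow> nat \<Rightarrow> nat \<Rightarrow> 'k" where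
  "mmul n A B = (\<lambda>i j. \<Sum>k\<in>{1..msize n}. A i k * B k j)"

definition mcomm :: "nat \<Rightarrow> (nat \<Rightarrow> nat \<Rightarrow> 'k::comm_ring_1) \<Rightarrow> (nat \<Rightarrow> nat \<Rightarrow> 'k) \<Rightarrow> nat \<Rightarrow> nat \<Rightarrow> 'k" where
  "mcomm n A B = (\<lambda>i j. mmul n A B i j - mmul n B A i j)"

definition mtrace :: "nat \<Rightarrow> (nat \<Rightarrow> nat \<Rightarrow> 'k::comm_ring_1) \<Rightarrow> 'k" where
  "mtrace n A = (\<Sum>i\<in>{1..msize n}. A i i)"

definition E :: "nat \<Rightarrow> nat \<Rightarrow> nat \<Rightarrow> nat \<Rightarrow> 'k::{zero,one}" where
  "E i j = (\<lambda>r c. if r = i \<and> c = j then 1 else 0)"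

definition gmu :: "(gb \<Rightarrow> 'k::comm_ring_1) \<Rightarrow> nat \<Rightarrow> nat \<Rightarrow> 'k" where
  "gmu u i j = (if i = j then 2 * u (Z i i) else if i < j then u (Z i j) else u (Z j i))"

definition rho :: "nat \<Rightarrow> (gb \<Rightarrow> 'k::comm_ring_1) \<Rightarrow> nat \<Rightarrow> nat \<Rightarrow> 'k" where
  "rho n u = (\<lambda>r c.
     if r < 1 \<or> c < 1 \<or> r > msize n \<or> c > msize n then 0
     else if r \<le> n - 2 then 0
     else if r = n - 1 then
       (if c \<le> n - 2 then u (Yp c) else if c = n - 1 then u H else if c = n then u Xp else 0)
     else if r = n then
       (if c \<le> n - 2 then u (Ym c) else if c = n - 1 then u Xm else if c = n then - u H else 0)
     else
       (let i = r - n in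
         if c \<le> n - 2 then gmu u i c else if c = n - 1 then - u (Ym i)
         else if c = n then u (Yp i) else 0))"

definition rho_faithful_sl :: "nat \<Rightarrow> 'k::comm_ring_1 itself \<Rightarrow> bool" where
  "rho_faithful_sl n _ \<longleftrightarrow>
     (\<forall>u\<in>(gelem n :: (gb \<Rightarrow> 'k) set). \<forall>v\<in>gelem n.
        rho n (\<lambda>b. u b + v b) = (\<lambda>r c. rho n u r c + rho n v r c)) \<and>
     (\<forall>u\<in>(gelem n :: (gb \<Rightarrow> 'k) set). \<forall>s::'k.
        rho n (\<lambda>b. s * u b) = (\<lambda>r c. s * rho n u r c)) \<and>
     (\<forall>u\<in>(gelem n :: (gb \<Rightarrow> 'k) set). mtrace n (rho n u) = 0) \<and>
     (\<forall>u\<in>(gelem n :: (gb \<Rightarrow> 'k) set). \<forall>v\<in>gelem n.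
        rho n (glie n u v) = mcomm n (rho n u) (rho n v)) \<and>
     inj_on (rho n) (gelem n :: (gb \<Rightarrow> 'k) set) \<and>
     rho n (gunit Xp :: gb \<Rightarrow> 'k) = E (n - 1) n \<and>
     rho n (gunit Xm :: gb \<Rightarrow> 'k) = E n (n - 1) \<and>
     rho n (gunit H :: gb \<Rightarrow> 'k) = (\<lambda>r c. E (n - 1) (n - 1) r c - E n n r c) \<and>
     (\<forall>i. 1 \<le> i \<and> i \<le> n - 2 \<longrightarrow>
        rho n (gunit (Yp i) :: gb \<Rightarrow> 'k) = (\<lambda>r c. E (n - 1) i r c + E (n + i) n r c) \<and>
        rho n (gunit (Ym i) :: gb \<Rightarrow> 'k) = (\<lambda>r c. E n i r c - E (n + i) (n - 1) r c)) \<and>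
     (\<forall>i j. 1 \<le> i \<and> i \<le> j \<and> j \<le> n - 2 \<longrightarrow>
        rho n (gunit (Z i j) :: gb \<Rightarrow> 'k) = (\<lambda>r c. E (i + n) j r c + E (j + n) i r c))"

end

theory Submission
  imports Defs
begin

text \<open>Every matrix \<open>\<rho>(u)\<close> vanishes outside the rows \<open>n - 1, \<dots>, 2(n - 1)\<close> and the
  columns \<open>1, \<dots>, n\<close>. Hence in a product \<open>\<rho>(u) \<rho>(v)\<close> only the summation indices
  \<open>n - 1\<close> and \<open>n\<close> contribute, every entry of \<open>[\<rho>(u), \<rho>(v)]\<close> is a sum of four products,
  and comparing it block by block with the coordinates of \<open>[u, v]\<close> read off from the bracket
  table proves that \<open>\<rho>\<close> is a homomorphism. The diagonal of \<open>\<rho>(u)\<close> is \<open>u(h), -u(h)\<close> and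
  zeros, so the trace vanishes. Every coordinate of \<open>u\<close> appears as an entry of \<open>\<rho>(u)\<close>
  (\<open>m\<^sub>i\<^sub>i\<close> with the factor \<open>2\<close>, which is where characteristic zero is used), so \<open>\<rho>\<close> is injective.\<close>

lemma finite_gbasis: "finite (gbasis n)"
proof -
  have "gbasis n \<subseteq> {H, Xp, Xm} \<union> Yp ` {1..n - 2} \<union> Ym ` {1..n - 2}
      \<union> case_prod Z ` ({1..n - 2} \<times> {1..n - 2})"
    unfolding gbasis_def by auto
  then show ?thesis
    by (rule finite_subset) auto
qed

lemma glie_eq_sum_support:
  fixes u v :: "gb \<Rightarrow> 'k::comm_ring_1"
  assumes "T \<subseteq> gbasis n \<times> gbasis n"
    and "\<And>a b. (a, b) \<notin> T \<Longrightarrow> brb a b c = (0::'k)"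
  shows "glie n u v c = (\<Sum>(a, b)\<in>T. u a * v b * brb a b c)"
proof -
  have "glie n u v c = (\<Sum>(a, b)\<in>gbasis n \<times> gbasis n. u a * v b * brb a b c)"
    unfolding glie_def by (simp add: sum.cartesian_product)
  also have "\<dots> = (\<Sum>(a, b)\<in>T. u a * v b * brb a b c)"
    using assms finite_gbasis by (intro sum.mono_neutral_right) auto
  finally show ?thesis .
qed

lemma glie_H: "glie n u v H = u Xp * v Xm - u Xm * v Xp"
proof -
  have "glie n u v H = (\<Sum>(a, b)\<in>{(Xp, Xm), (Xm, Xp)}. u a * v b * brb a b H)"
  proof (rule glie_eq_sum_support)
    show "(a, b) \<notin> {(Xp, Xm), (Xm, Xp)} \<Longrightarrow> brb a b H = 0" for a b
      by (cases a; cases b) (auto simp: gunit_def)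
  qed (auto simp: gbasis_def)
  then show ?thesis by (simp add: gunit_def)
qed

lemma glie_Xp: "glie n u v Xp = 2 * u H * v Xp - 2 * u Xp * v H"
proof -
  have "glie n u v Xp = (\<Sum>(a, b)\<in>{(H, Xp), (Xp, H)}. u a * v b * brb a b Xp)"
  proof (rule glie_eq_sum_support)
    show "(a, b) \<notin> {(H, Xp), (Xp, H)} \<Longrightarrow> brb a b Xp = 0" for a b
      by (cases a; cases b) (auto simp: gunit_def)
  qed (auto simp: gbasis_def)
  then show ?thesis by (simp add: gunit_def)
qed

lemma glie_Xm: "glie n u v Xm = 2 * u Xm * v H - 2 * u H * v Xm"
proof -
  have "glie n u v Xm = (\<Sum>(a, b)\<in>{(H, Xm), (Xm, H)}. u a * v b * brb a b Xm)"
  proof (rule glie_eq_sum_support)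
    show "(a, b) \<notin> {(H, Xm), (Xm, H)} \<Longrightarrow> brb a b Xm = 0" for a b
      by (cases a; cases b) (auto simp: gunit_def)
  qed (auto simp: gbasis_def)
  then show ?thesis by (simp add: gunit_def)
qed

lemma glie_Yp:
  assumes "1 \<le> i" "i \<le> n - 2"
  shows "glie n u v (Yp i) = u H * v (Yp i) - u (Yp i) * v H + u Xp * v (Ym i) - u (Ym i) * v Xp"
proof -
  have "glie n u v (Yp i) =
      (\<Sum>(a, b)\<in>{(H, Yp i), (Yp i, H), (Xp, Ym i), (Ym i, Xp)}. u a * v b * brb a b (Yp i))"
  proof (rule glie_eq_sum_support)
    show "(a, b) \<notin> {(H, Yp i), (Yp i, H), (Xp, Ym i), (Ym i, Xp)} \<Longrightarrow> brb a b (Yp i) = 0" for a b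
      by (cases a; cases b) (auto simp: gunit_def)
  qed (use assms in \<open>auto simp: gbasis_def\<close>)
  then show ?thesis by (simp add: gunit_def)
qed

lemma glie_Ym:
  assumes "1 \<le> i" "i \<le> n - 2"
  shows "glie n u v (Ym i) = u (Ym i) * v H - u H * v (Ym i) + u Xm * v (Yp i) - u (Yp i) * v Xm"
proof -
  have "glie n u v (Ym i) =
      (\<Sum>(a, b)\<in>{(H, Ym i), (Ym i, H), (Xm, Yp i), (Yp i, Xm)}. u a * v b * brb a b (Ym i))"
  proof (rule glie_eq_sum_support)
    show "(a, b) \<notin> {(H, Ym i), (Ym i, H), (Xm, Yp i), (Yp i, Xm)} \<Longrightarrow> brb a b (Ym i) = 0" for a b
      by (cases a; cases b) (auto simp: gunit_def)
  qed (use assms in \<open>auto simp: gbasis_def\<close>)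
  then show ?thesis by (simp add: gunit_def)
qed

lemma glie_Z_diagonal:
  assumes "1 \<le> i" "i \<le> n - 2"
  shows "glie n u v (Z i i) = u (Yp i) * v (Ym i) - u (Ym i) * v (Yp i)"
proof -
  have "glie n u v (Z i i) = (\<Sum>(a, b)\<in>{(Yp i, Ym i), (Ym i, Yp i)}. u a * v b * brb a b (Z i i))"
  proof (rule glie_eq_sum_support)
    show "(a, b) \<notin> {(Yp i, Ym i), (Ym i, Yp i)} \<Longrightarrow> brb a b (Z i i) = 0" for a b
      by (cases a; cases b) (auto simp: gunit_def min_def max_def)
  qed (use assms in \<open>auto simp: gbasis_def\<close>)
  then show ?thesis by (simp add: gunit_def)
qed

lemma glie_Z:
  assumes "1 \<le> i" "i < j" "j \<le> n - 2"
  shows "glie n u v (Z i j) =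
    u (Yp i) * v (Ym j) + u (Yp j) * v (Ym i) - u (Ym j) * v (Yp i) - u (Ym i) * v (Yp j)"
proof -
  let ?T = "{(Yp i, Ym j), (Ym j, Yp i), (Yp j, Ym i), (Ym i, Yp j)}"
  have "glie n u v (Z i j) = (\<Sum>(a, b)\<in>?T. u a * v b * brb a b (Z i j))"
  proof (rule glie_eq_sum_support)
    show "(a, b) \<notin> ?T \<Longrightarrow> brb a b (Z i j) = 0" for a b
      by (cases a; cases b) (auto simp: gunit_def min_def max_def)
  qed (use assms in \<open>auto simp: gbasis_def\<close>)
  then show ?thesis using assms by (simp add: gunit_def)
qed

lemma gmu_glie:
  assumes "1 \<le> i" "i \<le> n - 2" "1 \<le> j" "j \<le> n - 2"
  shows "gmu (glie n u v) i j =
    u (Yp i) * v (Ym j) + u (Yp j) * v (Ym i) - u (Ym j) * v (Yp i) - u (Ym i) * v (Yp j)"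
  using assms glie_Z[of i j n u v] glie_Z[of j i n u v]
  by (auto simp: gmu_def glie_Z_diagonal algebra_simps)

lemma rho_eq_zero:
  assumes "r \<le> n - 2 \<or> msize n < r \<or> c = 0 \<or> n < c"
  shows "rho n u r c = 0"
  using assms unfolding rho_def Let_def by (auto split: if_splits)

lemma rho_center_block:
  assumes "2 \<le> n"
  shows "rho n u (n - 1) (n - 1) = u H" "rho n u (n - 1) n = u Xp"
    and "rho n u n (n - 1) = u Xm" "rho n u n n = - u H"
  using assms by (auto simp: rho_def msize_def)

lemma rho_border:
  assumes "1 \<le> i" "i \<le> n - 2"
  shows "rho n u (n - 1) i = u (Yp i)" "rho n u n i = u (Ym i)"
    and "rho n u (i + n) (n - 1) = - u (Ym i)" "rho n u (i + n) n = u (Yp i)"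
  using assms by (auto simp: rho_def msize_def)

lemma rho_lower_left:
  assumes "1 \<le> i" "i \<le> n - 2" "1 \<le> j" "j \<le> n - 2"
  shows "rho n u (i + n) j = gmu u i j"
  using assms by (auto simp: rho_def msize_def)

lemma rho_row_cases:
  assumes "2 \<le> n"
  obtains (upper) "r \<le> n - 2" | (n_minus_1) "r = n - 1" | (n) "r = n"
    | (lower) i where "r = i + n" "1 \<le> i" "i \<le> n - 2" | (beyond) "msize n < r"
proof -
  have "r \<le> n - 2 \<or> r = n - 1 \<or> r = n
      \<or> (r = (r - n) + n \<and> 1 \<le> r - n \<and> r - n \<le> n - 2) \<or> msize n < r"
    using assms by (auto simp: msize_def)
  then show ?thesis
    using that by blast
qed

lemma rho_column_cases:
  fixes c n :: nat
  obtains (zero) "c = 0" | (left) "1 \<le> c" "c \<le> n - 2" | (n_minus_1) "c = n - 1" | (n) "c = n"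
    | (right) "n < c"
  by linarith

lemma sum_msize_eq_middle_terms:
  fixes f :: "nat \<Rightarrow> 'a::comm_monoid_add"
  assumes "2 \<le> n" and "\<And>k. k \<le> n - 2 \<or> n < k \<Longrightarrow> f k = 0"
  shows "(\<Sum>k\<in>{1..msize n}. f k) = f (n - 1) + f n"
proof -
  have "(\<Sum>k\<in>{1..msize n}. f k) = (\<Sum>k\<in>{n - 1, n}. f k)"
    using assms(1) by (intro sum.mono_neutral_right ballI assms(2)) (auto simp: msize_def)
  then show ?thesis
    using assms(1) by simp
qed

lemma mcomm_rho:
  assumes "2 \<le> n"
  shows "mcomm n (rho n u) (rho n v) r c =
    rho n u r (n - 1) * rho n v (n - 1) c + rho n u r n * rho n v n c
    - rho n v r (n - 1) * rho n u (n - 1) c - rho n v r n * rho n u n c"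
proof -
  have "mmul n (rho n u) (rho n v) r c =
      rho n u r (n - 1) * rho n v (n - 1) c + rho n u r n * rho n v n c"
    for u v :: "gb \<Rightarrow> 'a"
    unfolding mmul_def using assms by (rule sum_msize_eq_middle_terms) (auto simp: rho_eq_zero)
  then show ?thesis
    by (simp add: mcomm_def)
qed

lemma rho_glie:
  assumes "2 \<le> n"
  shows "rho n (glie n u v) = mcomm n (rho n u) (rho n v)"
proof (intro ext)
  fix r c
  show "rho n (glie n u v) r c = mcomm n (rho n u) (rho n v) r c"
    \<comment> \<open>\<open>One_nat_def\<close> would turn \<open>n - 1\<close> into \<open>n - Suc 0\<close> before the entry lemmas can match.\<close>
    by (cases r rule: rho_row_cases[OF assms]; cases c rule: rho_column_cases[where n = n])
      (simp_all del: One_nat_def add: assms mcomm_rho rho_eq_zero rho_center_block rho_border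
        rho_lower_left glie_H glie_Xp glie_Xm glie_Yp glie_Ym gmu_glie algebra_simps)
qed

lemma mtrace_rho:
  assumes "2 \<le> n"
  shows "mtrace n (rho n u) = 0"
proof -
  have "mtrace n (rho n u) = rho n u (n - 1) (n - 1) + rho n u n n"
    unfolding mtrace_def using assms by (rule sum_msize_eq_middle_terms) (auto simp: rho_eq_zero)
  then show ?thesis
    using assms by (simp del: One_nat_def add: rho_center_block)
qed

lemma rho_add: "rho n (\<lambda>b. u b + v b) = (\<lambda>r c. rho n u r c + rho n v r c)"
  by (intro ext) (simp add: rho_def gmu_def Let_def)

lemma rho_scale: "rho n (\<lambda>b. s * u b) = (\<lambda>r c. s * rho n u r c)"
  by (intro ext) (simp add: rho_def gmu_def Let_def)

lemma rho_eqI: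
  assumes "2 \<le> n"
    and upper: "\<And>r c. r \<le> n - 2 \<Longrightarrow> M r c = 0"
    and beyond: "\<And>r c. msize n < r \<Longrightarrow> M r c = 0"
    and column_0: "\<And>r. M r 0 = 0"
    and right: "\<And>r c. n < c \<Longrightarrow> M r c = 0"
    and center: "M (n - 1) (n - 1) = u H" "M (n - 1) n = u Xp" "M n (n - 1) = u Xm" "M n n = - u H"
    and border: "\<And>i. 1 \<le> i \<Longrightarrow> i \<le> n - 2 \<Longrightarrow> M (n - 1) i = u (Yp i)"
      "\<And>i. 1 \<le> i \<Longrightarrow> i \<le> n - 2 \<Longrightarrow> M n i = u (Ym i)"
      "\<And>i. 1 \<le> i \<Longrightarrow> i \<le> n - 2 \<Longrightarrow> M (i + n) (n - 1) = - u (Ym i)"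
      "\<And>i. 1 \<le> i \<Longrightarrow> i \<le> n - 2 \<Longrightarrow> M (i + n) n = u (Yp i)"
    and lower_left: "\<And>i j. 1 \<le> i \<Longrightarrow> i \<le> n - 2 \<Longrightarrow> 1 \<le> j \<Longrightarrow> j \<le> n - 2 \<Longrightarrow>
      M (i + n) j = gmu u i j"
  shows "rho n u = M"
proof (intro ext)
  fix r c
  show "rho n u r c = M r c"
    by (cases r rule: rho_row_cases[OF assms(1)]; cases c rule: rho_column_cases[where n = n])
      (simp_all del: One_nat_def add: assms rho_eq_zero rho_center_block rho_border rho_lower_left)
qed

lemma rho_gunit:
  assumes "2 \<le> n"
  shows "rho n (gunit H) = (\<lambda>r c. E (n - 1) (n - 1) r c - E n n r c)"
    and "rho n (gunit Xp) = E (n - 1) n"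
    and "rho n (gunit Xm) = E n (n - 1)"
    and "1 \<le> i \<Longrightarrow> i \<le> n - 2 \<Longrightarrow>
      rho n (gunit (Yp i)) = (\<lambda>r c. E (n - 1) i r c + E (n + i) n r c)"
    and "1 \<le> i \<Longrightarrow> i \<le> n - 2 \<Longrightarrow>
      rho n (gunit (Ym i)) = (\<lambda>r c. E n i r c - E (n + i) (n - 1) r c)"
    and "1 \<le> i \<Longrightarrow> i \<le> j \<Longrightarrow> j \<le> n - 2 \<Longrightarrow>
      rho n (gunit (Z i j)) = (\<lambda>r c. E (i + n) j r c + E (j + n) i r c)"
  \<comment> \<open>With \<open>n = 2 + m\<close> the index side conditions contain no truncated subtraction.\<close>
  using assms by (auto dest!: le_Suc_ex intro!: rho_eqI simp: E_def gunit_def gmu_def msize_def)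

lemma inj_on_rho:
  assumes "2 \<le> n"
  shows "inj_on (rho n) (gelem n :: (gb \<Rightarrow> 'k::{idom, ring_char_0}) set)"
proof (rule inj_onI, rule ext)
  fix u v :: "gb \<Rightarrow> 'k" and b
  assume u: "u \<in> gelem n" and v: "v \<in> gelem n" and eq: "rho n u = rho n v"
  have entry: "rho n u r c = rho n v r c" for r c
    using eq by simp
  show "u b = v b"
  proof (cases "b \<in> gbasis n")
    case False
    with u v show ?thesis by (simp add: gelem_def)
  next
    case b: True
    show ?thesis
    proof (cases b)
      case H
      with entry[of "n - 1" "n - 1"] show ?thesis by (simp only: rho_center_block[OF assms])
    next
      case Xp
      with entry[of "n - 1" n] show ?thesis by (simp only: rho_center_block[OF assms])
    next
      case Xm
      with entry[of n "n - 1"] show ?thesis by (simp only: rho_center_block[OF assms])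
    next
      case (Yp i)
      with b have "1 \<le> i" "i \<le> n - 2" by (auto simp: gbasis_def)
      with Yp entry[of "n - 1" i] show ?thesis by (simp only: rho_border)
    next
      case (Ym i)
      with b have "1 \<le> i" "i \<le> n - 2" by (auto simp: gbasis_def)
      with Ym entry[of n i] show ?thesis by (simp only: rho_border)
    next
      case (Z i j)
      with b have "1 \<le> i" "i \<le> j" "j \<le> n - 2" by (auto simp: gbasis_def)
      with Z entry[of "i + n" j] show ?thesis
        by (cases "i = j") (simp_all add: rho_lower_left gmu_def)
    qed
  qed
qed

lemma rho_faithful_sl_char_0:
  assumes "2 \<le> n"
  shows "rho_faithful_sl n TYPE('k::{idom, ring_char_0})"
  unfolding rho_faithful_sl_def
  using assms by (simp add: rho_add rho_scale mtrace_rho rho_glie inj_on_rho rho_gunit)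

theorem proposition3p5:
  fixes n :: nat
  assumes "n \<ge> 2"
  shows "rho_faithful_sl n TYPE(real) \<and> rho_faithful_sl n TYPE(complex)"
  using assms by (simp add: rho_faithful_sl_char_0)

end
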